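(* $M^L(6)\le 15$.
   Context: $\mathbb{F}=\{0,1\}$. The binary $n$-dimensional hypercube $\mathbb{F}^n$ is the graph on $\mathbb{F}^n$ where two words are adjacent iff their Hamming distance is $1$. For a nonempty $C\subseteq\mathbb{F}^n$, $I(\mathbf{x})=N[\mathbf{x}]\cap C$ with $N[\mathbf{x}]$ the words at Hamming distance $\le1$ from $\mathbf{x}$. $C$ is a local identifying code if $I(\mathbf{x})\ne\emptyset$ for all $\mathbf{x}$ and $I(\mathbf{x})\ne I(\mathbf{y})$ for all adjacent $\mathbf{x},\mathbf{y}$. $M^L(n)$ is the minimum cardinality of a local identifying code in $\mathbb{F}^n$. *)

theory Defs
  imports Main
begin

definition cube :: "nat \<Rightarrow> bool list set" where
  "cube n = {x. length x = n}"

definition hamming :: "bool list \<Rightarrow> bool list \<Rightarrow> nat" where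
  "hamming x y = card {i. i < length x \<and> x ! i \<noteq> y ! i}"

definition closed_nbhd :: "nat \<Rightarrow> bool list \<Rightarrow> bool list set" where
  "closed_nbhd n x = {y \<in> cube n. hamming x y \<le> 1}"

definition I_set :: "nat \<Rightarrow> bool list set \<Rightarrow> bool list \<Rightarrow> bool list set" where
  "I_set n C x = closed_nbhd n x \<inter> C"

definition local_identifying_code :: "nat \<Rightarrow> bool list set \<Rightarrow> bool" where
  "local_identifying_code n C \<longleftrightarrow>
     C \<subseteq> cube n \<and> C \<noteq> {} \<and>
     (\<forall>x \<in> cube n. I_set n C x \<noteq> {}) \<and>
     (\<forall>x \<in> cube n. \<forall>y \<in> cube n. hamming x y = 1 \<longrightarrow> I_set n C x \<noteq> I_set n C y)"

definition M_L :: "nat \<Rightarrow> nat" where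
  "M_L n = (LEAST k. \<exists>C. local_identifying_code n C \<and> card C = k)"

end

theory Submission
  imports Defs
begin

text \<open>An explicit code of 15 words witnesses the bound. As the 6-cube has only 64 words, both
  conditions of a local identifying code can be verified by exhaustive evaluation once the
  set-based Hamming distance is replaced by a computable one.\<close>

definition hamming_zip :: "bool list \<Rightarrow> bool list \<Rightarrow> nat" where
  "hamming_zip x y = length (filter (\<lambda>(a, b). a \<noteq> b) (zip x y))"

lemma hamming_eq_hamming_zip: "length x = length y \<Longrightarrow> hamming x y = hamming_zip x y"
  unfolding hamming_def hamming_zip_def
  by (simp add: length_filter_conv_card case_prod_beta cong: conj_cong)

lemma set_n_lists_bool_eq_cube: "set (List.n_lists n [False, True]) = cube n"
  unfolding cube_def by (auto simp: set_n_lists)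

lemma I_set_eq_hamming_zip:
  assumes "x \<in> cube n" and "C \<subseteq> cube n"
  shows "I_set n C x = {c \<in> C. hamming_zip x c \<le> 1}"
  using assms unfolding I_set_def closed_nbhd_def
  by (auto simp: cube_def hamming_eq_hamming_zip)

definition lic_test :: "nat \<Rightarrow> bool list list \<Rightarrow> bool" where
  "lic_test n Cs \<longleftrightarrow> Cs \<noteq> [] \<and> (\<forall>c \<in> set Cs. length c = n) \<and>
     (let W = List.n_lists n [False, True] in
       (\<forall>x \<in> set W. \<exists>c \<in> set Cs. hamming_zip x c \<le> 1) \<and>
       (\<forall>x \<in> set W. \<forall>y \<in> set W. hamming_zip x y = 1 \<longrightarrow>
          (\<exists>c \<in> set Cs. (hamming_zip x c \<le> 1) \<noteq> (hamming_zip y c \<le> 1))))"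

lemma local_identifying_code_if_lic_test:
  assumes "lic_test n Cs"
  shows "local_identifying_code n (set Cs)"
proof -
  have code: "set Cs \<subseteq> cube n" and nonempty: "set Cs \<noteq> {}"
    using assms by (auto simp: lic_test_def cube_def)
  have dominating: "\<exists>c \<in> set Cs. hamming_zip x c \<le> 1" if "x \<in> cube n" for x
    using assms that by (simp add: lic_test_def set_n_lists_bool_eq_cube)
  have separating: "\<exists>c \<in> set Cs. (hamming_zip x c \<le> 1) \<noteq> (hamming_zip y c \<le> 1)"
    if "x \<in> cube n" "y \<in> cube n" "hamming x y = 1" for x y
    using assms that
    by (simp add: lic_test_def set_n_lists_bool_eq_cube hamming_eq_hamming_zip cube_def)
  show ?thesis
    unfolding local_identifying_code_def
  proof (intro conjI ballI impI code nonempty)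
    fix x assume "x \<in> cube n"
    then show "I_set n (set Cs) x \<noteq> {}"
      using dominating code by (auto simp: I_set_eq_hamming_zip)
  next
    fix x y assume "x \<in> cube n" "y \<in> cube n" "hamming x y = 1"
    then show "I_set n (set Cs) x \<noteq> I_set n (set Cs) y"
      using separating[of x y] code by (auto simp: I_set_eq_hamming_zip)
  qed
qed

lemma M_L_le_card: "local_identifying_code n C \<Longrightarrow> M_L n \<le> card C"
  unfolding M_L_def by (auto intro: Least_le)

definition code6 :: "bool list list" where
  "code6 =
    [[True, False, True, False, False, False],
     [False, True, True, False, False, False],
     [True, True, True, False, False, False],
     [True, False, True, True, False, False],
     [False, False, False, False, True, False],
     [True, True, True, False, True, False],
     [False, False, False, True, True, False],
     [True, True, True, True, True, False],
     [True, False, False, True, False, True],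
     [False, True, False, True, False, True],
     [True, True, False, True, False, True],
     [False, False, False, False, True, True],
     [True, True, False, False, True, True],
     [False, False, True, False, True, True],
     [False, False, True, True, True, True]]"

lemma lic_test_code6: "lic_test 6 code6"
  unfolding lic_test_def code6_def by code_simp

lemma card_code6: "card (set code6) = 15"
  unfolding code6_def by simp

theorem mainTheorem9:
  shows "M_L 6 \<le> 15"
  using M_L_le_card[OF local_identifying_code_if_lic_test[OF lic_test_code6]]
  by (simp add: card_code6)

end
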